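(* Let $X=\mathbb{R}^n$ and suppose A1–A3 hold. Let $\{x_k\}$ be generated by Algorithm 1 in which the acceptance test is replaced by $$f(x_k+\alpha_k\beta^{l}d_k)\le R_k+\rho\alpha_k\beta^{l}\langle\nabla f(x_k),d_k\rangle,$$ where $R_k$ satisfies $f(x_k)\le R_k\le\max_{0\le j\le m(k)}f(x_{k-j})$, with integers $m(0)=0$ and $0\le m(k)\le\min\{m(k-1)+1,N\}$ for $k\ge1$, for a fixed $N\in\mathbb{N}$ (i.e. $\nu_{k,l}=R_k-f(x_k)$). If the level set $\{x\in\mathbb{R}^n:\ f(x)\le f(x_0)\}$ is bounded, then either there exists $\bar k$ with $\nabla f(x_{\bar k})=0$, or $\liminf_{k\to\infty}\|\nabla f(x_k)\|=0$.
   Context: Let $(X,\langle\cdot,\cdot\rangle)$ be a real Hilbert space with induced norm $\|\cdot\|$, and $f:X\to\mathbb{R}$ Fréchet differentiable with gradient $\nabla f$. Algorithm 1 (general non-monotone descent algorithm): parameters $x_0\in X$, $\alpha_0>0$, $\beta,\rho\in(0,1)$. For $k=0,1,2,\dots$: choose $d_k\in X$ with $\langle\nabla f(x_k),d_k\rangle<0$; then for $l=0,1,2,\dots$ choose a number $\nu_{k,l}\ge 0$ and test $$f(x_k+\alpha_k\beta^l d_k)\le f(x_k)+\rho\alpha_k\beta^l\langle\nabla f(x_k),d_k\rangle+\nu_{k,l};$$ let $l_k$ be the first $l$ for which this holds, set $\nu_k:=\nu_{k,l_k}$, $x_{k+1}=x_k+\alpha_k\beta^{l_k}d_k$ and $\alpha_{k+1}=\alpha_k\beta^{l_k-1}$.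 It is assumed the algorithm generates infinite sequences (all $l_k$ finite). Assumptions: A1: $\nabla f$ is Lipschitz continuous with constant $L>0$. A2: there is $f_{low}\in\mathbb{R}$ with $f(x)\ge f_{low}$ for all $x\in X$. A3: there are constants $c_1,c_2>0$ with $\langle\nabla f(x_k),d_k\rangle\le -c_1\|\nabla f(x_k)\|^2$ and $\|d_k\|\le c_2\|\nabla f(x_k)\|$ for all $k$. *)

theory Defs
  imports "HOL-Analysis.Analysis"
begin

end

theory Submission imports Defs begin

text \<open>
  Two facts make the nonmonotone Armijo search work. First, a rejected trial step is long: by the
  descent lemma, the test can only fail at step size s when s > (1 - \<rho>) c1 / (L c2^2), so every
  accepted step size t_k = \<alpha>_k \<beta>^l_k is bounded below by a fixed \<tau>0 > 0 (an accepted first trial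
  cannot shrink the step either, since \<alpha>_{k+1} = t_k / \<beta>). Hence each iterate satisfies
  f(x_{k+1}) \<le> W_k - \<rho> \<tau>0 c1 |\<nabla>f(x_k)|^2, where W_k is the maximum of f over the last m(k) + 1
  iterates. Second, W_k is nonincreasing, and if |\<nabla>f(x_k)| \<ge> \<epsilon> from some K on, then W drops
  by \<rho> \<tau>0 c1 \<epsilon>^2 every N + 1 steps, contradicting that f is bounded below.
\<close>

lemma lipschitz_gradient_quadratic_upper_bound:
  fixes f :: "'a::real_inner \<Rightarrow> real" and g :: "'a \<Rightarrow> 'a"
  assumes grad: "\<And>y. (f has_derivative (\<lambda>h. g y \<bullet> h)) (at y)"
    and lip: "\<And>y z. norm (g y - g z) \<le> L * norm (y - z)"
    and "L \<ge> 0" "s \<ge> 0"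
  shows "f (x + s *\<^sub>R d) \<le> f x + s * (g x \<bullet> d) + L * s\<^sup>2 * (norm d)\<^sup>2"
proof (cases "s = 0")
  case True
  then show ?thesis by simp
next
  case False
  with \<open>s \<ge> 0\<close> have "0 < s" by simp
  have der: "DERIV (\<lambda>t. f (x + t *\<^sub>R d)) t :> g (x + t *\<^sub>R d) \<bullet> d" for t
  proof -
    have "((\<lambda>t. x + t *\<^sub>R d) has_derivative (\<lambda>h. h *\<^sub>R d)) (at t)"
      by (auto intro!: derivative_eq_intros)
    from has_derivative_compose[OF this grad]
    show ?thesis
      by (auto intro: has_derivative_imp_has_field_derivative simp: o_def inner_scaleR_right)
  qed
  obtain z where z: "0 < z" "z < s"
    and mvt: "f (x + s *\<^sub>R d) - f x = s * (g (x + z *\<^sub>R d) \<bullet> d)"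
    using MVT2[OF \<open>0 < s\<close> der] by auto
  have "g (x + z *\<^sub>R d) \<bullet> d = g x \<bullet> d + (g (x + z *\<^sub>R d) - g x) \<bullet> d"
    by (simp add: inner_diff_left)
  also have "\<dots> \<le> g x \<bullet> d + norm (g (x + z *\<^sub>R d) - g x) * norm d"
    using norm_cauchy_schwarz by simp
  also have "\<dots> \<le> g x \<bullet> d + L * z * (norm d)\<^sup>2"
    using mult_right_mono[OF lip[of "x + z *\<^sub>R d" x] norm_ge_zero[of d]] z
    by (simp add: power2_eq_square mult.assoc)
  also have "\<dots> \<le> g x \<bullet> d + L * s * (norm d)\<^sup>2"
    using z \<open>L \<ge> 0\<close> by (intro add_left_mono mult_right_mono mult_left_mono) auto
  finally have "g (x + z *\<^sub>R d) \<bullet> d \<le> g x \<bullet> d + L * s * (norm d)\<^sup>2" .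
  from mult_left_mono[OF this, of s] \<open>0 < s\<close> mvt show ?thesis
    by (simp add: algebra_simps power2_eq_square)
qed

lemma armijo_rejection_stepsize_lower_bound:
  fixes f :: "'a::real_inner \<Rightarrow> real" and g :: "'a \<Rightarrow> 'a"
  assumes grad: "\<And>y. (f has_derivative (\<lambda>h. g y \<bullet> h)) (at y)"
    and lip: "\<And>y z. norm (g y - g z) \<le> L * norm (y - z)"
    and "L > 0" "c2 > 0" "s > 0" "\<rho> < 1" "g x \<noteq> 0" "f x \<le> R"
    and angle: "g x \<bullet> d \<le> - c1 * (norm (g x))\<^sup>2"
    and length: "norm d \<le> c2 * norm (g x)"
    and rejected: "\<not> f (x + s *\<^sub>R d) \<le> R + \<rho> * s * (g x \<bullet> d)"
  shows "(1 - \<rho>) * c1 / (L * c2\<^sup>2) < s"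
proof -
  have "\<rho> * s * (g x \<bullet> d) < s * (g x \<bullet> d) + L * s\<^sup>2 * (norm d)\<^sup>2"
    using rejected lipschitz_gradient_quadratic_upper_bound[OF grad lip, of s x d]
      \<open>L > 0\<close> \<open>s > 0\<close> \<open>f x \<le> R\<close> by simp
  then have "s * ((1 - \<rho>) * - (g x \<bullet> d)) < s * (L * s * (norm d)\<^sup>2)"
    by (simp add: algebra_simps power2_eq_square)
  then have "(1 - \<rho>) * - (g x \<bullet> d) < L * s * (norm d)\<^sup>2"
    using \<open>s > 0\<close> by (simp only: mult_less_cancel_left_pos)
  moreover have "(1 - \<rho>) * (c1 * (norm (g x))\<^sup>2) \<le> (1 - \<rho>) * - (g x \<bullet> d)"
    using angle \<open>\<rho> < 1\<close> by (intro mult_left_mono) auto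
  moreover have "L * s * (norm d)\<^sup>2 \<le> L * s * (c2 * norm (g x))\<^sup>2"
    using length \<open>L > 0\<close> \<open>s > 0\<close> by (intro mult_left_mono power_mono) auto
  ultimately have "((1 - \<rho>) * c1) * (norm (g x))\<^sup>2 < (L * c2\<^sup>2 * s) * (norm (g x))\<^sup>2"
    by (simp add: algebra_simps power_mult_distrib)
  then have "(1 - \<rho>) * c1 < L * c2\<^sup>2 * s"
    using \<open>g x \<noteq> 0\<close> by (simp add: mult_less_cancel_right)
  then show ?thesis
    using \<open>L > 0\<close> \<open>c2 > 0\<close> by (simp add: divide_less_eq mult.commute)
qed

lemma backtracking_stepsize_pos:
  fixes \<alpha> :: "nat \<Rightarrow> real"
  assumes "\<alpha> 0 > 0" "\<beta> > 0"
    and astep: "\<And>k. \<alpha> (Suc k) = \<alpha> k * \<beta> powi (int (lk k) - 1)"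
  shows "\<alpha> k > 0"
proof (induction k)
  case (Suc k)
  then show ?case
    using astep[of k] zero_less_power_int[OF \<open>\<beta> > 0\<close>] by simp
qed (rule assms(1))

lemma backtracking_accepted_stepsize_lower_bound:
  fixes \<alpha> :: "nat \<Rightarrow> real"
  assumes "\<alpha> 0 > 0" "0 < \<beta>" "\<beta> < 1" "\<tau> > 0"
    and astep: "\<And>k. \<alpha> (Suc k) = \<alpha> k * \<beta> powi (int (lk k) - 1)"
    and rejected: "\<And>k l. l < lk k \<Longrightarrow> \<tau> < \<alpha> k * \<beta> ^ l"
  shows "min (\<alpha> 0) (\<beta> * \<tau>) \<le> \<alpha> k * \<beta> ^ lk k"
proof -
  have backtracked: "\<beta> * \<tau> \<le> \<alpha> k * \<beta> ^ lk k" if nonzero: "lk k \<noteq> 0" for k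
  proof -
    obtain l where l: "lk k = Suc l"
      using nonzero not0_implies_Suc by blast
    then have "\<beta> * \<tau> \<le> \<beta> * (\<alpha> k * \<beta> ^ l)"
      using rejected[of l k] \<open>\<beta> > 0\<close> by simp
    then show ?thesis
      by (simp add: l mult.left_commute)
  qed
  show ?thesis
  proof (induction k)
    case 0
    then show ?case
      using backtracked[of 0] by (cases "lk 0 = 0") auto
  next
    case (Suc k)
    show ?case
    proof (cases "lk (Suc k) = 0")
      case True
      have "\<beta> powi (int (lk k) - 1) = \<beta> ^ lk k / \<beta>"
        using \<open>\<beta> > 0\<close> by (simp add: power_int_diff)
      then have "\<alpha> (Suc k) * \<beta> ^ lk (Suc k) = \<alpha> k * \<beta> ^ lk k / \<beta>"
        using True astep[of k] by simp
      moreover have "0 < min (\<alpha> 0) (\<beta> * \<tau>)"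
        using assms(1,2,4) by simp
      then have "0 < \<alpha> k * \<beta> ^ lk k"
        using Suc.IH by linarith
      then have "\<alpha> k * \<beta> ^ lk k \<le> \<alpha> k * \<beta> ^ lk k / \<beta>"
        using assms(2,3) by (simp add: le_divide_eq mult_left_le)
      ultimately show ?thesis
        using Suc.IH by simp
    next
      case False
      then show ?thesis
        using backtracked[of "Suc k"] by simp
    qed
  qed
qed

lemma armijo_sufficient_decrease:
  fixes f :: "'a::real_inner \<Rightarrow> real" and g :: "'a \<Rightarrow> 'a"
  assumes "\<rho> > 0" "c1 \<ge> 0" "0 \<le> \<tau>" "\<tau> \<le> t"
    and angle: "g x \<bullet> d \<le> - c1 * (norm (g x))\<^sup>2"
    and accepted: "f (x + t *\<^sub>R d) \<le> R + \<rho> * t * (g x \<bullet> d)"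
  shows "f (x + t *\<^sub>R d) \<le> R - \<rho> * \<tau> * c1 * (norm (g x))\<^sup>2"
proof -
  have "\<tau> * (c1 * (norm (g x))\<^sup>2) \<le> t * - (g x \<bullet> d)"
    using assms(2-4) angle by (intro mult_mono) auto
  then have "\<rho> * \<tau> * c1 * (norm (g x))\<^sup>2 \<le> - (\<rho> * t * (g x \<bullet> d))"
    using mult_left_mono[of _ _ \<rho>] \<open>\<rho> > 0\<close> by (fastforce simp: mult.assoc)
  with accepted show ?thesis
    by linarith
qed

definition window_max :: "(nat \<Rightarrow> real) \<Rightarrow> (nat \<Rightarrow> nat) \<Rightarrow> nat \<Rightarrow> real" where
  "window_max F m k = Max ((\<lambda>j. F (k - j)) ` {0..m k})"

lemma window_max_ge: "j \<le> m k \<Longrightarrow> F (k - j) \<le> window_max F m k"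
  unfolding window_max_def by (intro Max_ge) auto

lemma window_max_attained: "\<exists>j \<le> m k. window_max F m k = F (k - j)"
proof -
  have "window_max F m k \<in> (\<lambda>j. F (k - j)) ` {0..m k}"
    unfolding window_max_def by (intro Max_in) auto
  then show ?thesis by auto
qed

lemma window_max_Suc_le:
  assumes "m (Suc k) \<le> Suc (m k)" "F (Suc k) \<le> window_max F m k"
  shows "window_max F m (Suc k) \<le> window_max F m k"
proof -
  obtain j where j: "j \<le> m (Suc k)" "window_max F m (Suc k) = F (Suc k - j)"
    using window_max_attained by blast
  show ?thesis
  proof (cases j)
    case 0
    then show ?thesis using j assms(2) by simp
  next
    case (Suc i)
    then show ?thesis
      using j assms(1) window_max_ge[of i m k F] by simp
  qed
qed

lemma window_max_drop:
  assumes window: "\<And>k. m (Suc k) \<le> Suc (m k)" "\<And>k. m k \<le> N"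
    and nonincr: "\<And>k. F (Suc k) \<le> window_max F m k"
    and drop: "\<And>i. i \<ge> K \<Longrightarrow> F (Suc i) \<le> window_max F m i - \<delta>"
    and "k \<ge> K"
  shows "window_max F m (k + Suc N) \<le> window_max F m k - \<delta>"
proof -
  have "decseq (window_max F m)"
    using window_max_Suc_le[OF window(1) nonincr] by (simp add: decseq_Suc_iff)
  obtain j where j: "j \<le> m (k + Suc N)" "window_max F m (k + Suc N) = F (k + Suc N - j)"
    using window_max_attained by blast
  define i where "i = k + N - j"
  have "j \<le> N"
    using j(1) window(2)[of "k + Suc N"] by simp
  then have "k + Suc N - j = Suc i" "i \<ge> k"
    unfolding i_def by auto
  then have "window_max F m (k + Suc N) \<le> window_max F m i - \<delta>"
    using j(2) drop[of i] \<open>k \<ge> K\<close> by simp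
  also have "window_max F m i \<le> window_max F m k"
    using \<open>decseq _\<close> \<open>i \<ge> k\<close> by (simp add: decseqD)
  finally show ?thesis by simp
qed

lemma liminf_ereal_eq_0I:
  fixes G :: "nat \<Rightarrow> real"
  assumes "\<And>k. 0 \<le> G k"
    and small: "\<And>\<epsilon>. \<epsilon> > 0 \<Longrightarrow> frequently (\<lambda>k. G k < \<epsilon>) sequentially"
  shows "liminf (\<lambda>k. ereal (G k)) = 0"
proof (rule antisym)
  show "0 \<le> liminf (\<lambda>k. ereal (G k))"
    using assms(1) by (intro Liminf_bounded always_eventually) simp
  show "liminf (\<lambda>k. ereal (G k)) \<le> 0"
  proof (rule ccontr)
    assume "\<not> ?thesis"
    then have "0 < liminf (\<lambda>k. ereal (G k))"
      by simp
    then obtain z where "0 < ereal z" "ereal z < liminf (\<lambda>k. ereal (G k))"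
      using ereal_dense2 by blast
    from less_LiminfD[OF this(2)] have "eventually (\<lambda>k. \<not> G k < z) sequentially"
      by (rule eventually_mono) simp
    moreover have "frequently (\<lambda>k. G k < z) sequentially"
      using small \<open>0 < ereal z\<close> by simp
    ultimately show False
      by (simp add: frequently_def)
  qed
qed

lemma nonmonotone_descent_liminf_eq_0:
  fixes F G :: "nat \<Rightarrow> real"
  assumes window: "\<And>k. m (Suc k) \<le> Suc (m k)" "\<And>k. m k \<le> N"
    and bounded_below: "\<And>k. F k \<ge> b"
    and "c > 0" "\<And>k. G k \<ge> 0"
    and decrease: "\<And>k. F (Suc k) \<le> window_max F m k - c * (G k)\<^sup>2"
  shows "liminf (\<lambda>k. ereal (G k)) = 0"
proof (rule liminf_ereal_eq_0I)
  show "0 \<le> G k" for k by fact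
  fix \<epsilon> :: real
  assume "\<epsilon> > 0"
  show "frequently (\<lambda>k. G k < \<epsilon>) sequentially"
  proof (rule ccontr)
    assume "\<not> ?thesis"
    then obtain K where K: "\<And>i. i \<ge> K \<Longrightarrow> \<epsilon> \<le> G i"
      by (auto simp: not_frequently eventually_sequentially not_less)
    define \<delta> where "\<delta> = c * \<epsilon>\<^sup>2"
    have "\<delta> > 0"
      unfolding \<delta>_def using \<open>c > 0\<close> \<open>\<epsilon> > 0\<close> by simp
    have nonincr: "F (Suc k) \<le> window_max F m k" for k
      using decrease[of k] \<open>c > 0\<close> zero_le_power2[of "G k"] mult_nonneg_nonneg[of c "(G k)\<^sup>2"] by linarith
    have "F (Suc i) \<le> window_max F m i - \<delta>" if "i \<ge> K" for i
    proof -
      have "\<delta> \<le> c * (G i)\<^sup>2"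
        unfolding \<delta>_def using K[OF that] \<open>c > 0\<close> \<open>\<epsilon> > 0\<close>
        by (intro mult_left_mono power_mono) auto
      then show ?thesis using decrease[of i] by simp
    qed
    note drop = window_max_drop[where K = K, OF window nonincr this]
    have iter: "window_max F m (K + n * Suc N) \<le> window_max F m K - real n * \<delta>" for n
    proof (induction n)
      case (Suc n)
      have "window_max F m (K + n * Suc N + Suc N) \<le> window_max F m (K + n * Suc N) - \<delta>"
        by (rule drop) auto
      with Suc show ?case by (simp add: algebra_simps add.assoc)
    qed simp
    obtain n where "window_max F m K - b < real n * \<delta>"
      using reals_Archimedean3[OF \<open>\<delta> > 0\<close>] by blast
    moreover have "b \<le> window_max F m (K + n * Suc N)"
      using window_max_ge[of 0 m "K + n * Suc N" F] bounded_below[of "K + n * Suc N"] by simp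
    ultimately show False
      using iter[of n] by simp
  qed
qed

theorem corollary3:
  fixes f :: "'a::euclidean_space \<Rightarrow> real"
    and g :: "'a \<Rightarrow> 'a"
    and x d :: "nat \<Rightarrow> 'a"
    and \<alpha> R :: "nat \<Rightarrow> real"
    and lk m :: "nat \<Rightarrow> nat"
    and \<beta> \<rho> L flow c1 c2 :: real
    and N :: nat
  assumes grad: "\<And>y. (f has_derivative (\<lambda>h. g y \<bullet> h)) (at y)"
    and A1: "L > 0" "\<And>y z. norm (g y - g z) \<le> L * norm (y - z)"
    and A2: "\<And>y. f y \<ge> flow"
    and A3: "c1 > 0" "c2 > 0"
      "\<And>k. g (x k) \<bullet> d k \<le> - c1 * (norm (g (x k)))\<^sup>2"
      "\<And>k. norm (d k) \<le> c2 * norm (g (x k))"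
    and params: "\<alpha> 0 > 0" "0 < \<beta>" "\<beta> < 1" "0 < \<rho>" "\<rho> < 1"
    and descent: "\<And>k. g (x k) \<bullet> d k < 0"
    and m0: "m 0 = 0"
    and mk: "\<And>k. k \<ge> 1 \<Longrightarrow> m k \<le> min (m (k - 1) + 1) N"
    and Rk: "\<And>k. f (x k) \<le> R k"
      "\<And>k. R k \<le> Max ((\<lambda>j. f (x (k - j))) ` {0..m k})"
    and accept: "\<And>k. f (x k + (\<alpha> k * \<beta> ^ lk k) *\<^sub>R d k)
                    \<le> R k + \<rho> * \<alpha> k * \<beta> ^ lk k * (g (x k) \<bullet> d k)"
    and first: "\<And>k l. l < lk k \<Longrightarrow> \<not> (f (x k + (\<alpha> k * \<beta> ^ l) *\<^sub>R d k)
                    \<le> R k + \<rho> * \<alpha> k * \<beta> ^ l * (g (x k) \<bullet> d k))"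
    and xstep: "\<And>k. x (Suc k) = x k + (\<alpha> k * \<beta> ^ lk k) *\<^sub>R d k"
    and astep: "\<And>k. \<alpha> (Suc k) = \<alpha> k * \<beta> powi (int (lk k) - 1)"
    and level: "bounded {y. f y \<le> f (x 0)}"
  shows "(\<exists>k. g (x k) = 0) \<or> liminf (\<lambda>k. ereal (norm (g (x k)))) = 0"
proof -
  define \<tau> where "\<tau> = (1 - \<rho>) * c1 / (L * c2\<^sup>2)"
  define \<tau>0 where "\<tau>0 = min (\<alpha> 0) (\<beta> * \<tau>)"
  have "\<tau> > 0" "\<tau>0 > 0"
    unfolding \<tau>_def \<tau>0_def using A1 A3 params by auto
  have "\<tau> < \<alpha> k * \<beta> ^ l" if "l < lk k" for k l
    unfolding \<tau>_def
  proof (rule armijo_rejection_stepsize_lower_bound[OF grad A1(2) A1(1) A3(2) _ params(5) _ Rk(1) A3(3,4)])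
    show "0 < \<alpha> k * \<beta> ^ l"
      using backtracking_stepsize_pos[OF params(1,2) astep] params(2) by simp
    show "g (x k) \<noteq> 0"
      using descent[of k] by auto
    show "\<not> f (x k + (\<alpha> k * \<beta> ^ l) *\<^sub>R d k)
        \<le> R k + \<rho> * (\<alpha> k * \<beta> ^ l) * (g (x k) \<bullet> d k)"
      using first[OF that] by (simp add: mult.assoc)
  qed
  then have step_bound: "\<tau>0 \<le> \<alpha> k * \<beta> ^ lk k" for k
    unfolding \<tau>0_def
    by (rule backtracking_accepted_stepsize_lower_bound[OF params(1-3) \<open>\<tau> > 0\<close> astep])
  have decrease: "f (x (Suc k))
      \<le> window_max (\<lambda>k. f (x k)) m k - \<rho> * \<tau>0 * c1 * (norm (g (x k)))\<^sup>2" for k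
  proof -
    have "f (x (Suc k)) \<le> R k - \<rho> * \<tau>0 * c1 * (norm (g (x k)))\<^sup>2"
      using armijo_sufficient_decrease[where g = g and x = "x k" and d = "d k" and f = f and R = "R k",
          OF params(4) _ _ step_bound[of k] A3(3)[of k]]
        accept[of k] xstep[of k] A3(1) \<open>\<tau>0 > 0\<close> by (simp add: mult.assoc)
    with Rk(2)[of k] show ?thesis
      by (simp add: window_max_def)
  qed
  have window: "m (Suc k) \<le> Suc (m k)" "m k \<le> N" for k
    using mk[of k] mk[of "Suc k"] m0 by (cases k; simp)+
  have "liminf (\<lambda>k. ereal (norm (g (x k)))) = 0"
    using nonmonotone_descent_liminf_eq_0[where F = "\<lambda>k. f (x k)" and b = flow
        and c = "\<rho> * \<tau>0 * c1" and G = "\<lambda>k. norm (g (x k))", OF window _ _ _ decrease]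
      A2 A3(1) params(4) \<open>\<tau>0 > 0\<close> by simp
  then show ?thesis ..
qed

end
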